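(* Let $\alpha>1$ and let $A=1+\left(\frac{2}{2\alpha-1}\right)^{2\alpha-1}\alpha^\alpha(\alpha-1)^{\alpha-1}$. Then the norm of the Ces\`aro operator on the $\alpha$-Bloch space satisfies $$\|\mathcal{C}\|_{\mathcal{B}^\alpha\to\mathcal{B}^\alpha}\le\begin{cases}\max\left\{A,\dfrac{2^\alpha}{\alpha-1}\right\}, & 1<\alpha\le 2,\\[1em] \max\left\{A,\,2^\alpha\dfrac{2^\alpha-\alpha-1}{(\alpha-1)^2}\right\}, & \alpha>2.\end{cases}$$
   Context: $\mathbb{D}$ is the open unit disc and $H(\mathbb{D})$ the space of analytic functions on $\mathbb{D}$. For $f(z)=\sum_{k\ge0}a_kz^k\in H(\mathbb{D})$ the Ces\`aro operator is $\mathcal{C}(f)(z)=\sum_{n\ge0}\Big(\frac{1}{n+1}\sum_{k=0}^n a_k\Big)z^n=\int_0^1\frac{f(tz)}{1-tz}\,dt$. For $\alpha>0$ the $\alpha$-Bloch space $\mathcal{B}^\alpha$ consists of $f\in H(\mathbb{D})$ with $\sup_{z\in\mathbb{D}}(1-|z|^2)^\alpha|f'(z)|<\infty$, normed by $\|f\|_{\mathcal{B}^\alpha}=|f(0)|+\sup_{z\in\mathbb{D}}(1-|z|^2)^\alpha|f'(z)|$. Operator norms are $\|\mathcal{C}\|_{X\to Y}=\sup\{\|\mathcal{C}f\|_Y:\|f\|_X\le 1\}$. *)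

theory Defs
  imports "HOL-Complex_Analysis.Complex_Analysis"
begin

definition cesaro :: "(complex \<Rightarrow> complex) \<Rightarrow> complex \<Rightarrow> complex" where
  "cesaro f z = integral {0..1} (\<lambda>t::real. f (of_real t * z) / (1 - of_real t * z))"

definition bloch_space :: "real \<Rightarrow> (complex \<Rightarrow> complex) set" where
  "bloch_space \<alpha> = {f. f holomorphic_on ball 0 1 \<and>
      bdd_above ((\<lambda>z. (1 - (cmod z)\<^sup>2) powr \<alpha> * cmod (deriv f z)) ` ball 0 1)}"

definition bloch_norm :: "real \<Rightarrow> (complex \<Rightarrow> complex) \<Rightarrow> real" where
  "bloch_norm \<alpha> f = cmod (f 0) + (SUP z\<in>ball 0 1. (1 - (cmod z)\<^sup>2) powr \<alpha> * cmod (deriv f z))"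

definition cesaro_bloch_opnorm :: "real \<Rightarrow> ereal" where
  "cesaro_bloch_opnorm \<alpha> =
     (SUP f\<in>{f\<in>bloch_space \<alpha>. bloch_norm \<alpha> f \<le> 1}.
        (if cesaro f \<in> bloch_space \<alpha> then ereal (bloch_norm \<alpha> (cesaro f)) else \<infinity>))"

end

theory Submission
  imports Defs
begin

text \<open>
  Write \<open>C f z = \<integral>\<^sub>0\<^sup>1 h (t z) dt\<close> with \<open>h w = f w / (1 - w)\<close>; then \<open>(C f)' z = \<integral>\<^sub>0\<^sup>1 t h' (t z) dt\<close>
  and \<open>h' = f' / (1 - w) + f / (1 - w)^2\<close>. If \<open>M\<close> is the Bloch seminorm of \<open>f\<close>, then
  \<open>|f' w| \<le> M (1 - |w|)^(-\<alpha>)\<close> and, integrating along the radius,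
  \<open>|f w| \<le> |f 0| + M ((1 - |w|)^(1 - \<alpha>) - 1) / (\<alpha> - 1)\<close>. The resulting bound for the
  integrand has an explicit antiderivative; evaluated and multiplied by \<open>(1 - r^2)^\<alpha>\<close>,
  \<open>r = |z|\<close>, it becomes \<open>|f 0| (1 + r)^\<alpha> (1 - r)^(\<alpha> - 1) + M (1 + r)^\<alpha> (1 - (1 - r)^(\<alpha> - 1)) / ((\<alpha> - 1) r)\<close>.
  The first weight is at most \<open>A - 1\<close> by weighted AM-GM, the second is bounded by elementary
  estimates of \<open>(1 - r)^(\<alpha> - 1)\<close>. As \<open>C f 0 = f 0\<close> and \<open>|f 0| + M \<le> 1\<close>, the Bloch norm of
  \<open>C f\<close> is at most the larger of the two constants.
\<close>

section \<open>Real inequalities\<close>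

lemma two_powr_ge_double:
  fixes a :: real
  assumes "a \<ge> 2"
  shows "2 * a \<le> 2 powr a"
proof -
  define t where "t = a - 2"
  define x where "x = t * ln 2"
  have t: "t \<ge> 0" using assms by (simp add: t_def)
  have "2 powr a = 2 powr 2 * 2 powr t"
    using powr_add[of 2 2 t] by (simp add: t_def)
  also have "\<dots> = 4 * exp x"
    by (simp add: x_def powr_def[of 2 t])
  finally have "2 powr a = 4 * exp x" .
  moreover have "1 + x \<le> exp x"
    by (rule exp_ge_add_one_self)
  moreover have "2 * t \<le> 3 * x"
    using mult_left_mono[OF ln2_ge_two_thirds t] by (simp add: x_def)
  ultimately show ?thesis
    using t t_def by linarith
qed

lemma two_powr_ge_quadratic:
  fixes a :: real
  assumes "a \<ge> 3"
  shows "(a - 1)\<^sup>2 + a + 1 \<le> 2 powr a"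
proof -
  define t where "t = a - 3"
  define x where "x = t * ln 2"
  have t: "t \<ge> 0" using assms by (simp add: t_def)
  have "2 powr a = 2 powr 3 * 2 powr t"
    using powr_add[of 2 3 t] by (simp add: t_def)
  also have "\<dots> = 8 * exp x"
    by (simp add: x_def powr_def[of 2 t])
  finally have "2 powr a = 8 * exp x" .
  moreover have "1 + x + x\<^sup>2 / 2 \<le> exp x"
    by (rule exp_lower_Taylor_quadratic) (use t in \<open>simp add: x_def\<close>)
  moreover have tx: "2 * t \<le> 3 * x"
    using mult_left_mono[OF ln2_ge_two_thirds t] by (simp add: x_def)
  moreover have "4 * t\<^sup>2 \<le> 9 * x\<^sup>2"
    using power_mono[OF tx, of 2] t by (simp add: power_mult_distrib)
  moreover have "(a - 1)\<^sup>2 + a + 1 = 8 + 5 * t + t\<^sup>2"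
    by (simp add: t_def power2_eq_square algebra_simps)
  ultimately show ?thesis
    using t zero_le_power2[of t] by linarith
qed

lemma Bernoulli_inequality_powr:
  fixes p x :: real
  assumes p: "p \<ge> 1" and x: "x \<ge> -1"
  shows "1 + p * x \<le> (1 + x) powr p"
proof (cases "x = -1")
  case True
  then show ?thesis using p by simp
next
  case False
  with x have x: "1 + x > 0" by simp
  have "((1 + x) powr p) powr (1 / p) * 1 powr (1 - 1 / p) \<le> (1 / p) * (1 + x) powr p + (1 - 1 / p) * 1"
    by (rule Youngs_inequality_0) (use p x in auto)
  moreover have "((1 + x) powr p) powr (1 / p) = 1 + x"
    using p x by (simp add: powr_powr)
  ultimately have "p * (1 + x) \<le> p * ((1 / p) * (1 + x) powr p + (1 - 1 / p))"
    using p by simp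
  also have "\<dots> = (1 + x) powr p + p - 1"
    using p by (simp add: algebra_simps)
  finally show ?thesis by (simp add: algebra_simps)
qed

definition value_weight :: "real \<Rightarrow> real \<Rightarrow> real" where
  "value_weight a r = (1 + r) powr a * (1 - r) powr (a - 1)"

definition seminorm_weight :: "real \<Rightarrow> real \<Rightarrow> real" where
  "seminorm_weight a r = (1 + r) powr a * (1 - (1 - r) powr (a - 1)) / ((a - 1) * r)"

definition seminorm_weight_bound :: "real \<Rightarrow> real" where
  "seminorm_weight_bound a =
     (if a \<le> 2 then 2 powr a / (a - 1) else 2 powr a * (2 powr a - a - 1) / (a - 1)\<^sup>2)"

text \<open>Weighted AM-GM with weights \<open>p = a/(2a-1)\<close>, \<open>q = (a-1)/(2a-1)\<close> applied to
  \<open>u = (1+r)/(2p)\<close>, \<open>v = (1-r)/(2q)\<close>, whose weighted mean \<open>p u + q v\<close> is 1.\<close>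
lemma value_weight_le:
  fixes a r :: real
  assumes a: "a > 1" and r: "0 \<le> r" "r < 1"
  shows "value_weight a r \<le> (2 / (2*a - 1)) powr (2*a - 1) * a powr a * (a - 1) powr (a - 1)"
proof -
  define p where "p = a / (2*a - 1)"
  define q where "q = (a - 1) / (2*a - 1)"
  have d: "2*a - 1 > 0" using a by simp
  have pq: "p > 0" "q > 0" "p + q = 1"
    using a d by (simp_all add: p_def q_def add_divide_distrib[symmetric])
  define u where "u = (1 + r) / (2*p)"
  define v where "v = (1 - r) / (2*q)"
  have uv: "u > 0" "v > 0" using pq r by (auto simp: u_def v_def)
  have "u powr p * v powr q \<le> p * u + q * v"
    by (rule Youngs_inequality_0) (use pq uv in auto)
  also have "p * u + q * v = 1"
    using pq by (simp add: u_def v_def field_simps)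
  finally have "(u powr p * v powr q) powr (2*a - 1) \<le> 1"
    using d by (intro powr_le1) auto
  also have "(u powr p * v powr q) powr (2*a - 1) = u powr a * v powr (a - 1)"
    using d by (simp add: powr_mult powr_powr p_def q_def)
  also have "u powr a * v powr (a - 1) = value_weight a r / ((2*p) powr a * (2*q) powr (a - 1))"
    by (simp add: u_def v_def value_weight_def powr_divide)
  finally have "value_weight a r \<le> (2*p) powr a * (2*q) powr (a - 1)"
    using pq by (simp add: divide_le_eq)
  also have "\<dots> = (2 / (2*a - 1)) powr (2*a - 1) * a powr a * (a - 1) powr (a - 1)"
  proof -
    have "(2*p) powr a = (2 / (2*a - 1)) powr a * a powr a"
      unfolding p_def by (simp add: powr_mult[symmetric])
    moreover have "(2*q) powr (a - 1) = (2 / (2*a - 1)) powr (a - 1) * (a - 1) powr (a - 1)"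
      unfolding q_def by (simp add: powr_mult[symmetric])
    moreover have "(2 / (2*a - 1)) powr a * (2 / (2*a - 1)) powr (a - 1) = (2 / (2*a - 1)) powr (2*a - 1)"
      by (simp add: powr_add[symmetric])
    ultimately show ?thesis
      by (simp add: algebra_simps)
  qed
  finally show ?thesis .
qed

lemma seminorm_weight_le_of_le_2:
  fixes a r :: real
  assumes a: "1 < a" "a \<le> 2" and r: "0 < r" "r < 1"
  shows "seminorm_weight a r \<le> 2 powr a / (a - 1)"
proof -
  have "(1 - r) powr 1 \<le> (1 - r) powr (a - 1)"
    by (rule powr_mono') (use a r in auto)
  moreover have "(1 - r) powr (a - 1) \<le> 1"
    using a r by (intro powr_le1) auto
  moreover have "(1 + r) powr a \<le> 2 powr a"
    using a r by (intro powr_mono2) auto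
  ultimately have "(1 + r) powr a * (1 - (1 - r) powr (a - 1)) \<le> 2 powr a * r"
    by (intro mult_mono) auto
  then have "seminorm_weight a r \<le> 2 powr a * r / ((a - 1) * r)"
    unfolding seminorm_weight_def using a r by (intro divide_right_mono) auto
  then show ?thesis
    using r by simp
qed

lemma seminorm_weight_le_of_le_3:
  fixes a r :: real
  assumes a: "2 \<le> a" "a \<le> 3" and r: "0 < r" "r < 1"
  shows "seminorm_weight a r \<le> 2 powr a / (a - 1)"
proof -
  have cubic: "(1 + r)\<^sup>2 * (2 - r) \<le> 2\<^sup>2"
  proof -
    have "4 - (2 - r) * (1 + r)\<^sup>2 = (1 - r)\<^sup>2 * (2 + r)"
      by (simp add: power2_eq_square algebra_simps)
    moreover have "0 \<le> (1 - r)\<^sup>2 * (2 + r)"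
      using r by simp
    ultimately show ?thesis
      by (simp add: algebra_simps)
  qed
  have "(1 + r) powr (a - 2) \<le> 2 powr (a - 2)"
    using a r by (intro powr_mono2) auto
  then have "(1 + r) powr (a - 2) * ((1 + r)\<^sup>2 * (2 - r)) \<le> 2 powr (a - 2) * 2\<^sup>2"
    using cubic r by (intro mult_mono) auto
  moreover have "(1 + r) powr a = (1 + r) powr (a - 2) * (1 + r)\<^sup>2"
    "(2::real) powr a = 2 powr (a - 2) * 2\<^sup>2"
    using r powr_add[of "1 + r" "a - 2" 2] powr_add[of 2 "a - 2" 2] by simp_all
  ultimately have peak: "(1 + r) powr a * (2 - r) \<le> 2 powr a"
    by (simp add: mult.assoc)
  have "(1 - r) powr 2 \<le> (1 - r) powr (a - 1)"
    by (rule powr_mono') (use a r in auto)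
  then have "1 - (1 - r) powr (a - 1) \<le> (2 - r) * r"
    using r by (simp add: power2_eq_square algebra_simps)
  then have "(1 + r) powr a * (1 - (1 - r) powr (a - 1)) \<le> (1 + r) powr a * (2 - r) * r"
    by (simp add: mult_left_mono mult.assoc)
  also have "\<dots> \<le> 2 powr a * r"
    using peak r by (intro mult_right_mono) auto
  finally have "seminorm_weight a r \<le> 2 powr a * r / ((a - 1) * r)"
    unfolding seminorm_weight_def using a r by (intro divide_right_mono) auto
  then show ?thesis
    using r by simp
qed

lemma seminorm_weight_le_of_ge_2:
  fixes a r :: real
  assumes a: "2 \<le> a" and r: "0 < r" "r < 1"
  shows "seminorm_weight a r \<le> 2 powr a"
proof -
  have "1 - (a - 1) * r \<le> (1 - r) powr (a - 1)"
    using Bernoulli_inequality_powr[of "a - 1" "- r"] a r by simp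
  moreover have "(1 - r) powr (a - 1) \<le> 1"
    using a r by (intro powr_le1) auto
  moreover have "(1 + r) powr a \<le> 2 powr a"
    using a r by (intro powr_mono2) auto
  ultimately have "(1 + r) powr a * (1 - (1 - r) powr (a - 1)) \<le> 2 powr a * ((a - 1) * r)"
    using a r by (intro mult_mono) auto
  then have "seminorm_weight a r \<le> 2 powr a * ((a - 1) * r) / ((a - 1) * r)"
    unfolding seminorm_weight_def using a r by (intro divide_right_mono) auto
  then show ?thesis
    using a r by simp
qed

lemma seminorm_weight_le_bound:
  fixes a r :: real
  assumes a: "a > 1" and r: "0 < r" "r < 1"
  shows "seminorm_weight a r \<le> seminorm_weight_bound a"
proof -
  consider "a \<le> 2" | "2 < a" "a \<le> 3" | "3 < a" by linarith
  then show ?thesis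
  proof cases
    case 1
    then show ?thesis
      using seminorm_weight_le_of_le_2[OF a 1 r] by (simp add: seminorm_weight_bound_def)
  next
    case 2
    \<comment> \<open>here the Bernoulli bound \<open>2 powr a\<close> of \<open>seminorm_weight_le_of_ge_2\<close> may exceed the target\<close>
    have "a - 1 \<le> 2 powr a - a - 1"
      using two_powr_ge_double[of a] 2 by simp
    then have "2 powr a * (a - 1) \<le> 2 powr a * (2 powr a - a - 1)"
      by (intro mult_left_mono) auto
    then have "2 powr a * (a - 1) / (a - 1)\<^sup>2 \<le> 2 powr a * (2 powr a - a - 1) / (a - 1)\<^sup>2"
      by (rule divide_right_mono) simp
    moreover have "2 powr a * (a - 1) / (a - 1)\<^sup>2 = 2 powr a / (a - 1)"
      using 2 by (simp add: power2_eq_square)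
    ultimately have "2 powr a / (a - 1) \<le> 2 powr a * (2 powr a - a - 1) / (a - 1)\<^sup>2"
      by simp
    then show ?thesis
      using seminorm_weight_le_of_le_3[of a r] 2 r by (simp add: seminorm_weight_bound_def)
  next
    case 3
    have "(a - 1)\<^sup>2 \<le> 2 powr a - a - 1"
      using two_powr_ge_quadratic[of a] 3 by simp
    then have "2 powr a * (a - 1)\<^sup>2 \<le> 2 powr a * (2 powr a - a - 1)"
      by (intro mult_left_mono) auto
    then have "2 powr a \<le> 2 powr a * (2 powr a - a - 1) / (a - 1)\<^sup>2"
      using 3 by (simp add: field_simps)
    then show ?thesis
      using seminorm_weight_le_of_ge_2[of a r] 3 r by (simp add: seminorm_weight_bound_def)
  qed
qed

section \<open>Pointwise estimates for Bloch functions\<close>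

definition bloch_seminorm :: "real \<Rightarrow> (complex \<Rightarrow> complex) \<Rightarrow> real" where
  "bloch_seminorm a f = (SUP z\<in>ball 0 1. (1 - (cmod z)\<^sup>2) powr a * cmod (deriv f z))"

lemma bloch_norm_eq: "bloch_norm a f = cmod (f 0) + bloch_seminorm a f"
  by (simp add: bloch_norm_def bloch_seminorm_def)

lemma bloch_seminorm_upper:
  assumes "f \<in> bloch_space a" "w \<in> ball 0 1"
  shows "(1 - (cmod w)\<^sup>2) powr a * cmod (deriv f w) \<le> bloch_seminorm a f"
  unfolding bloch_seminorm_def
  by (rule cSUP_upper) (use assms in \<open>auto simp: bloch_space_def\<close>)

lemma bloch_seminorm_nonneg:
  assumes "f \<in> bloch_space a"
  shows "0 \<le> bloch_seminorm a f"
  using bloch_seminorm_upper[OF assms, of 0] by (simp add: order_trans[OF norm_ge_zero])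

lemma bloch_space_seminorm_le:
  assumes "g holomorphic_on ball 0 1"
    and "\<And>z. z \<in> ball 0 1 \<Longrightarrow> (1 - (cmod z)\<^sup>2) powr a * cmod (deriv g z) \<le> K"
  shows "g \<in> bloch_space a" "bloch_seminorm a g \<le> K"
proof -
  show "g \<in> bloch_space a"
    unfolding bloch_space_def using assms by (auto intro!: bdd_aboveI2[where M = K])
  show "bloch_seminorm a g \<le> K"
    unfolding bloch_seminorm_def by (rule cSUP_least) (use assms in auto)
qed

lemma of_real_mult_mem_unit_ball:
  fixes z :: "'a::real_normed_div_algebra"
  assumes "z \<in> ball 0 1" "t \<in> {0..1::real}"
  shows "of_real t * z \<in> ball 0 1"
proof -
  have "norm (of_real t * z) = \<bar>t\<bar> * norm z" by (simp add: norm_mult)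
  also have "\<dots> \<le> norm z" using assms(2) by (auto intro: mult_left_le_one_le)
  finally show ?thesis using assms(1) by auto
qed

lemma norm_integral_le_antiderivative_diff:
  fixes g :: "real \<Rightarrow> 'a::euclidean_space" and G G' :: "real \<Rightarrow> real"
  assumes "g integrable_on {a..b}" "a \<le> b"
    and "\<And>t. t \<in> {a..b} \<Longrightarrow> norm (g t) \<le> G' t"
    and "\<And>t. t \<in> {a..b} \<Longrightarrow> (G has_real_derivative G' t) (at t within {a..b})"
  shows "norm (integral {a..b} g) \<le> G b - G a"
proof -
  have "(G' has_integral (G b - G a)) {a..b}"
    by (rule fundamental_theorem_of_calculus)
       (use assms in \<open>auto simp: has_real_derivative_iff_has_vector_derivative\<close>)
  moreover have "norm (integral {a..b} g) \<le> integral {a..b} G'"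
    by (rule integral_norm_bound_integral) (use assms calculation in auto)
  ultimately show ?thesis
    by (simp add: integral_unique)
qed

lemma bloch_deriv_le:
  fixes f :: "complex \<Rightarrow> complex"
  assumes a: "a \<ge> 0"
    and B: "\<And>w. w \<in> ball 0 1 \<Longrightarrow> (1 - (cmod w)\<^sup>2) powr a * cmod (deriv f w) \<le> M"
    and w: "w \<in> ball 0 1"
  shows "cmod (deriv f w) \<le> M * (1 - cmod w) powr (- a)"
proof -
  have w1: "cmod w < 1" using w by simp
  have "(1 - cmod w) powr a \<le> (1 - (cmod w)\<^sup>2) powr a"
    using w1 a by (intro powr_mono2) (auto simp: power2_eq_square mult_left_le_one_le)
  then have "(1 - cmod w) powr a * cmod (deriv f w) \<le> M"
    using B[OF w] by (meson mult_right_mono norm_ge_zero order_trans)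
  moreover have "(1 - cmod w) powr a > 0" using w1 by simp
  ultimately show ?thesis
    by (simp add: powr_minus_divide le_divide_eq mult.commute)
qed

lemma has_integral_radial_deriv:
  fixes f :: "complex \<Rightarrow> complex"
  assumes hol: "f holomorphic_on ball 0 1" and w: "w \<in> ball 0 1"
  shows "((\<lambda>s. deriv f (of_real s * w) * w) has_integral (f w - f 0)) {0..1}"
proof -
  have "((\<lambda>s. f (of_real s * w)) has_vector_derivative deriv f (of_real s * w) * w) (at s within {0..1})"
    if s: "s \<in> {0..1}" for s
  proof -
    have "(f has_field_derivative deriv f (of_real s * w)) (at (of_real s * w))"
      by (rule holomorphic_derivI[OF hol]) (use of_real_mult_mem_unit_ball[OF w s] in auto)
    then have "((\<lambda>\<zeta>. f (\<zeta> * w)) has_field_derivative deriv f (of_real s * w) * w) (at (of_real s))"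
      by (rule DERIV_chain2) (auto intro!: derivative_eq_intros)
    then show ?thesis
      by (rule has_vector_derivative_real_field)
  qed
  then show ?thesis
    using fundamental_theorem_of_calculus[of 0 1 "\<lambda>s. f (of_real s * w)"] by simp
qed

lemma growth_majorant_has_derivative:
  fixes a \<rho> s :: real
  assumes a: "a \<noteq> 1" and s\<rho>: "s * \<rho> < 1"
  shows "((\<lambda>s. (1 - s * \<rho>) powr (1 - a) / (a - 1)) has_real_derivative \<rho> * (1 - s * \<rho>) powr (- a)) (at s)"
proof -
  have "((\<lambda>x. x powr (1 - a)) has_real_derivative (1 - a) * (1 - s * \<rho>) powr (1 - a - 1)) (at (1 - s * \<rho>))"
    by (rule has_real_derivative_powr) (use s\<rho> in simp)
  then have "((\<lambda>s. (1 - s * \<rho>) powr (1 - a)) has_real_derivative (1 - a) * (1 - s * \<rho>) powr (1 - a - 1) * - \<rho>)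
               (at s)"
    by (rule DERIV_chain2) (auto intro!: derivative_eq_intros)
  then have "((\<lambda>s. (1 - s * \<rho>) powr (1 - a) / (a - 1)) has_real_derivative
               (1 - a) * (1 - s * \<rho>) powr (1 - a - 1) * - \<rho> / (a - 1)) (at s)"
    by (rule DERIV_cdivide)
  moreover have "(1 - a) * (1 - s * \<rho>) powr (1 - a - 1) * - \<rho> / (a - 1) = \<rho> * (1 - s * \<rho>) powr (- a)"
    using a by (simp add: field_simps)
  ultimately show ?thesis
    by simp
qed

lemma bloch_growth_le:
  fixes f :: "complex \<Rightarrow> complex"
  assumes hol: "f holomorphic_on ball 0 1" and a: "a > 1"
    and B: "\<And>w. w \<in> ball 0 1 \<Longrightarrow> (1 - (cmod w)\<^sup>2) powr a * cmod (deriv f w) \<le> M"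
    and w: "w \<in> ball 0 1"
  shows "cmod (f w) \<le> cmod (f 0) + M * (((1 - cmod w) powr (1 - a) - 1) / (a - 1))"
proof -
  define \<rho> where "\<rho> = cmod w"
  have \<rho>: "0 \<le> \<rho>" "\<rho> < 1" using w by (auto simp: \<rho>_def)
  note ftc = has_integral_radial_deriv[OF hol w]
  define G where "G = (\<lambda>s::real. M * ((1 - s * \<rho>) powr (1 - a) / (a - 1)))"
  have "norm (integral {0..1} (\<lambda>s. deriv f (of_real s * w) * w)) \<le> G 1 - G 0"
  proof (rule norm_integral_le_antiderivative_diff)
    show "(\<lambda>s. deriv f (of_real s * w) * w) integrable_on {0..1}"
      using ftc by blast
  next
    fix s :: real assume s: "s \<in> {0..1}"
    have "cmod (deriv f (of_real s * w) * w) = cmod (deriv f (of_real s * w)) * \<rho>"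
      by (simp add: norm_mult \<rho>_def)
    also have "\<dots> \<le> M * (1 - s * \<rho>) powr (- a) * \<rho>"
      using bloch_deriv_le[OF _ B of_real_mult_mem_unit_ball[OF w s]] a s \<rho>
      by (intro mult_right_mono) (auto simp: norm_mult \<rho>_def)
    finally show "cmod (deriv f (of_real s * w) * w) \<le> M * (\<rho> * (1 - s * \<rho>) powr (- a))"
      by (simp add: algebra_simps)
  next
    fix s :: real assume s: "s \<in> {0..1}"
    have s\<rho>: "s * \<rho> < 1"
      using s \<rho> mult_left_le_one_le[of \<rho> s] by auto
    show "(G has_real_derivative M * (\<rho> * (1 - s * \<rho>) powr (- a))) (at s within {0..1})"
      unfolding G_def
      by (rule has_field_derivative_at_within[OF DERIV_cmult[OF growth_majorant_has_derivative]])
         (use a s\<rho> in auto)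
  qed simp
  then have "cmod (f w - f 0) \<le> G 1 - G 0"
    by (simp only: integral_unique[OF ftc])
  then have "cmod (f w - f 0) \<le> M * (((1 - cmod w) powr (1 - a) - 1) / (a - 1))"
    by (simp add: G_def \<rho>_def diff_divide_distrib right_diff_distrib)
  then show ?thesis
    using norm_triangle_ineq2[of "f w" "f 0"] by linarith
qed

section \<open>The derivative of the Cesaro transform\<close>

lemma cesaro_has_field_derivative:
  fixes f :: "complex \<Rightarrow> complex"
  assumes hol: "f holomorphic_on ball 0 1" and z: "z \<in> ball 0 1"
  shows "(cesaro f has_field_derivative
           integral {0..1} (\<lambda>t. of_real t * deriv (\<lambda>w. f w / (1 - w)) (of_real t * z))) (at z)"
proof -
  define h where "h = (\<lambda>w. f w / (1 - w))"
  have hh: "h holomorphic_on ball 0 1"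
    unfolding h_def by (intro holomorphic_intros hol) (auto simp: dist_norm)
  have dh: "deriv h holomorphic_on ball 0 1"
    by (rule holomorphic_deriv[OF hh]) auto
  have "((\<lambda>x. integral (cbox 0 1) (\<lambda>t. h (of_real t * x))) has_field_derivative
          integral (cbox 0 1) (\<lambda>t. of_real t * deriv h (of_real t * z))) (at z within ball 0 1)"
  proof (rule leibniz_rule_field_derivative)
    fix x :: complex and t assume x: "x \<in> ball 0 1" and t: "t \<in> cbox 0 (1::real)"
    have "(h has_field_derivative deriv h (of_real t * x)) (at (of_real t * x))"
      by (rule holomorphic_derivI[OF hh]) (use of_real_mult_mem_unit_ball[OF x] t in auto)
    then have "((\<lambda>x. h (of_real t * x)) has_field_derivative deriv h (of_real t * x) * of_real t)
                 (at x within ball 0 1)"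
      by (rule DERIV_chain2) (auto intro!: derivative_eq_intros)
    then show "((\<lambda>x. h (of_real t * x)) has_field_derivative of_real t * deriv h (of_real t * x))
                 (at x within ball 0 1)"
      by (simp add: mult.commute)
  next
    fix x :: complex assume x: "x \<in> ball 0 1"
    have "continuous_on {0..1} (\<lambda>t::real. h (of_real t * x))"
      by (rule continuous_on_compose2[OF holomorphic_on_imp_continuous_on[OF hh]])
         (use of_real_mult_mem_unit_ball[OF x] in \<open>auto intro!: continuous_intros\<close>)
    then show "(\<lambda>t. h (of_real t * x)) integrable_on cbox 0 1"
      by (auto intro: integrable_continuous_interval)
  next
    have "continuous_on (ball 0 1 \<times> cbox 0 1) (\<lambda>p. deriv h (of_real (snd p) * fst p))"
      by (rule continuous_on_compose2[OF holomorphic_on_imp_continuous_on[OF dh]])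
         (use of_real_mult_mem_unit_ball[where 'a = complex] in \<open>auto intro!: continuous_intros\<close>)
    then show "continuous_on (ball 0 1 \<times> cbox 0 1) (\<lambda>(x, t). of_real t * deriv h (of_real t * x))"
      by (auto simp: case_prod_beta intro!: continuous_intros)
  qed (use z in auto)
  moreover have "at z within ball 0 1 = at z"
    by (rule at_within_open[OF z]) simp
  moreover have "cesaro f = (\<lambda>x. integral (cbox 0 1) (\<lambda>t. h (of_real t * x)))"
    by (auto simp: cesaro_def h_def fun_eq_iff)
  ultimately show ?thesis
    by (simp add: h_def)
qed

lemma holomorphic_on_cesaro:
  assumes "f holomorphic_on ball 0 1"
  shows "cesaro f holomorphic_on ball 0 1"
  unfolding holomorphic_on_def field_differentiable_def
  using cesaro_has_field_derivative[OF assms] by (blast intro: has_field_derivative_at_within)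

lemma deriv_div_one_minus:
  fixes f :: "complex \<Rightarrow> complex"
  assumes "f holomorphic_on ball 0 1" "\<zeta> \<in> ball 0 1"
  shows "deriv (\<lambda>w. f w / (1 - w)) \<zeta> = deriv f \<zeta> / (1 - \<zeta>) + f \<zeta> / (1 - \<zeta>)\<^sup>2"
proof -
  have ne: "1 - \<zeta> \<noteq> 0" "\<zeta> \<noteq> 1" using assms(2) by auto
  have "(f has_field_derivative deriv f \<zeta>) (at \<zeta>)"
    by (rule holomorphic_derivI[OF assms(1)]) (use assms(2) in auto)
  then have "((\<lambda>w. f w / (1 - w)) has_field_derivative
               (deriv f \<zeta> * (1 - \<zeta>) - f \<zeta> * (- 1)) / ((1 - \<zeta>) * (1 - \<zeta>))) (at \<zeta>)"
    by (rule derivative_eq_intros) (auto intro!: derivative_eq_intros ne)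
  then have "deriv (\<lambda>w. f w / (1 - w)) \<zeta> = (deriv f \<zeta> * (1 - \<zeta>) + f \<zeta>) / ((1 - \<zeta>) * (1 - \<zeta>))"
    by (simp add: DERIV_imp_deriv)
  also have "\<dots> = deriv f \<zeta> / (1 - \<zeta>) + f \<zeta> / (1 - \<zeta>)\<^sup>2"
    using ne(1) by (simp add: add_divide_distrib power2_eq_square)
  finally show ?thesis .
qed

definition cesaro_integrand_bound :: "real \<Rightarrow> real \<Rightarrow> real \<Rightarrow> real \<Rightarrow> real \<Rightarrow> real" where
  "cesaro_integrand_bound a c M r t =
     M * (1 - t * r) powr (- a) / (1 - t * r) + (c + M * (((1 - t * r) powr (1 - a) - 1) / (a - 1))) / (1 - t * r)\<^sup>2"

definition cesaro_majorant :: "real \<Rightarrow> real \<Rightarrow> real \<Rightarrow> real \<Rightarrow> real \<Rightarrow> real" where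
  "cesaro_majorant a c M r t =
     c * (t / (1 - t * r)) + M / ((a - 1) * r) * ((1 - t * r) powr (- a) - 1 / (1 - t * r))"

lemma cesaro_integrand_le:
  fixes f :: "complex \<Rightarrow> complex"
  assumes hol: "f holomorphic_on ball 0 1" and a: "a > 1"
    and B: "\<And>w. w \<in> ball 0 1 \<Longrightarrow> (1 - (cmod w)\<^sup>2) powr a * cmod (deriv f w) \<le> M"
    and z: "z \<in> ball 0 1" and t: "t \<in> {0..1}"
  shows "cmod (of_real t * deriv (\<lambda>w. f w / (1 - w)) (of_real t * z)) \<le>
           cesaro_integrand_bound a (cmod (f 0)) M (cmod z) t"
proof -
  define u where "u = 1 - t * cmod z"
  define \<zeta> where "\<zeta> = of_real t * z"
  have \<zeta>: "\<zeta> \<in> ball 0 1"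
    using of_real_mult_mem_unit_ball[OF z t] by (simp add: \<zeta>_def)
  have u: "u = 1 - cmod \<zeta>" "0 < u"
    using t \<zeta> by (auto simp: u_def \<zeta>_def norm_mult)
  have u_le: "u \<le> cmod (1 - \<zeta>)"
    using norm_triangle_ineq2[of 1 \<zeta>] u by simp
  have "cmod (of_real t * deriv (\<lambda>w. f w / (1 - w)) \<zeta>) \<le> cmod (deriv (\<lambda>w. f w / (1 - w)) \<zeta>)"
    using t by (simp add: norm_mult mult_left_le_one_le)
  also have "\<dots> \<le> cmod (deriv f \<zeta>) / cmod (1 - \<zeta>) + cmod (f \<zeta>) / (cmod (1 - \<zeta>))\<^sup>2"
    unfolding deriv_div_one_minus[OF hol \<zeta>] by (metis norm_divide norm_power norm_triangle_ineq)
  also have "\<dots> \<le> M * u powr (- a) / u + (cmod (f 0) + M * ((u powr (1 - a) - 1) / (a - 1))) / u\<^sup>2"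
  proof (rule add_mono)
    have "cmod (deriv f \<zeta>) \<le> M * u powr (- a)"
      using bloch_deriv_le[OF _ B \<zeta>] a u by simp
    then show "cmod (deriv f \<zeta>) / cmod (1 - \<zeta>) \<le> M * u powr (- a) / u"
      using u u_le by (intro frac_le) (auto intro: order_trans[OF norm_ge_zero])
  next
    have "cmod (f \<zeta>) \<le> cmod (f 0) + M * ((u powr (1 - a) - 1) / (a - 1))"
      using bloch_growth_le[OF hol a B \<zeta>] u by simp
    moreover have "u\<^sup>2 \<le> (cmod (1 - \<zeta>))\<^sup>2"
      using u u_le by (intro power_mono) auto
    ultimately show "cmod (f \<zeta>) / (cmod (1 - \<zeta>))\<^sup>2 \<le> (cmod (f 0) + M * ((u powr (1 - a) - 1) / (a - 1))) / u\<^sup>2"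
      using u by (intro frac_le) (auto intro: order_trans[OF norm_ge_zero])
  qed
  finally show ?thesis
    by (simp add: \<zeta>_def u_def cesaro_integrand_bound_def)
qed

lemma cesaro_majorant_has_derivative:
  fixes a c M r t :: real
  assumes a: "a \<noteq> 1" and r: "r \<noteq> 0" and tr: "t * r < 1"
  shows "(cesaro_majorant a c M r has_real_derivative cesaro_integrand_bound a c M r t) (at t)"
proof -
  define u where "u = 1 - t * r"
  have u: "u > 0" using tr by (simp add: u_def)
  have "((\<lambda>x. x powr (- a)) has_real_derivative - a * u powr (- a - 1)) (at u)"
    by (rule has_real_derivative_powr[OF u])
  then have d1: "((\<lambda>t. (1 - t * r) powr (- a)) has_real_derivative - a * u powr (- a - 1) * - r) (at t)"
    unfolding u_def by (rule DERIV_chain2) (auto intro!: derivative_eq_intros)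
  have d2: "((\<lambda>t. t / (1 - t * r)) has_real_derivative 1 / u\<^sup>2) (at t)"
    using u by (auto intro!: derivative_eq_intros simp: u_def field_simps power2_eq_square)
  have d3: "((\<lambda>t. 1 / (1 - t * r)) has_real_derivative r / u\<^sup>2) (at t)"
    using u by (auto intro!: derivative_eq_intros simp: u_def field_simps power2_eq_square)
  have "(cesaro_majorant a c M r has_real_derivative
           c * (1 / u\<^sup>2) + M / ((a - 1) * r) * (- a * u powr (- a - 1) * - r - r / u\<^sup>2)) (at t)"
    unfolding cesaro_majorant_def[abs_def] by (intro DERIV_add DERIV_cmult DERIV_diff d1 d2 d3)
  moreover have "c * (1 / u\<^sup>2) + M / ((a - 1) * r) * (- a * u powr (- a - 1) * - r - r / u\<^sup>2) =
                 cesaro_integrand_bound a c M r t"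
  proof -
    have "u powr (- a - 1) = u powr (- a) / u"
      using u by (simp add: powr_diff)
    moreover have "u powr (1 - a) = u * u powr (- a)"
      using u powr_mult_base[of u "- a"] by simp
    ultimately show ?thesis
      unfolding cesaro_integrand_bound_def u_def[symmetric]
      using u a r by (simp add: field_simps power2_eq_square)
  qed
  ultimately show ?thesis
    by simp
qed

lemma weighted_cesaro_majorant_eq:
  fixes a c M r :: real
  assumes a: "a \<noteq> 1" and r: "0 < r" "r < 1"
  shows "(1 - r\<^sup>2) powr a * (cesaro_majorant a c M r 1 - cesaro_majorant a c M r 0) =
           c * value_weight a r + M * seminorm_weight a r"
proof -
  define d where "d = 1 - r"
  define k where "k = (a - 1) * r"
  define P where "P = d powr a"
  have pos: "d > 0" "k \<noteq> 0" "P > 0"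
    using a r by (auto simp: d_def k_def P_def)
  have "d powr (- a) = 1 / P" "d powr (a - 1) = P / d"
    using pos by (simp_all add: P_def powr_minus_divide powr_diff)
  then have "cesaro_majorant a c M r 1 - cesaro_majorant a c M r 0 = c / d + M / k * (1 / P - 1 / d)"
    "value_weight a r = (1 + r) powr a * (P / d)"
    "seminorm_weight a r = (1 + r) powr a * (1 - P / d) / k"
    by (simp_all add: cesaro_majorant_def value_weight_def seminorm_weight_def d_def k_def)
  moreover have "(1 - r\<^sup>2) powr a = (1 + r) powr a * P"
    by (simp add: P_def d_def powr_mult[symmetric] power2_eq_square algebra_simps)
  ultimately show ?thesis
    using pos by (simp only:) (simp add: field_simps)
qed

lemma cesaro_deriv_weighted_le:
  fixes f :: "complex \<Rightarrow> complex"
  assumes hol: "f holomorphic_on ball 0 1" and a: "a > 1"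
    and B: "\<And>w. w \<in> ball 0 1 \<Longrightarrow> (1 - (cmod w)\<^sup>2) powr a * cmod (deriv f w) \<le> M"
    and z: "z \<in> ball 0 1" "z \<noteq> 0"
  shows "(1 - (cmod z)\<^sup>2) powr a * cmod (deriv (cesaro f) z) \<le>
           cmod (f 0) * value_weight a (cmod z) + M * seminorm_weight a (cmod z)"
proof -
  define r where "r = cmod z"
  define G where "G = cesaro_majorant a (cmod (f 0)) M r"
  define h where "h = (\<lambda>w. f w / (1 - w))"
  have r: "0 < r" "r < 1" using z by (auto simp: r_def)
  have "cmod (integral {0..1} (\<lambda>t. of_real t * deriv h (of_real t * z))) \<le> G 1 - G 0"
  proof (rule norm_integral_le_antiderivative_diff)
    have "h holomorphic_on ball 0 1"
      unfolding h_def by (intro holomorphic_intros hol) (auto simp: dist_norm)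
    then have "deriv h holomorphic_on ball 0 1"
      by (rule holomorphic_deriv) auto
    then have "continuous_on {0..1} (\<lambda>t::real. deriv h (of_real t * z))"
      by (rule continuous_on_compose2[OF holomorphic_on_imp_continuous_on])
         (use of_real_mult_mem_unit_ball[OF z(1)] in \<open>auto intro!: continuous_intros\<close>)
    then have "continuous_on {0..1} (\<lambda>t::real. of_real t * deriv h (of_real t * z))"
      by (intro continuous_intros) auto
    then show "(\<lambda>t. of_real t * deriv h (of_real t * z)) integrable_on {0..1}"
      by (rule integrable_continuous_interval)
  next
    fix t :: real assume t: "t \<in> {0..1}"
    then show "cmod (of_real t * deriv h (of_real t * z)) \<le> cesaro_integrand_bound a (cmod (f 0)) M r t"
      using cesaro_integrand_le[OF hol a B z(1) t] by (simp add: h_def r_def)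
  next
    fix t :: real assume t: "t \<in> {0..1}"
    have "t * r \<le> 1 * r"
      using t r by (intro mult_right_mono) auto
    with r have tr: "t * r < 1"
      by linarith
    show "(G has_real_derivative cesaro_integrand_bound a (cmod (f 0)) M r t) (at t within {0..1})"
      unfolding G_def
      by (rule has_field_derivative_at_within[OF cesaro_majorant_has_derivative]) (use a r tr in auto)
  qed simp
  then have "cmod (deriv (cesaro f) z) \<le> G 1 - G 0"
    by (simp add: h_def DERIV_imp_deriv[OF cesaro_has_field_derivative[OF hol z(1)]])
  then have "(1 - r\<^sup>2) powr a * cmod (deriv (cesaro f) z) \<le> (1 - r\<^sup>2) powr a * (G 1 - G 0)"
    by (intro mult_left_mono) auto
  also have "\<dots> = cmod (f 0) * value_weight a r + M * seminorm_weight a r"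
    unfolding G_def using a r by (intro weighted_cesaro_majorant_eq) auto
  finally show ?thesis
    by (simp add: r_def)
qed

lemma continuous_on_bloch_weighted_deriv:
  assumes "g holomorphic_on ball 0 1"
  shows "continuous_on (ball 0 1) (\<lambda>z. (1 - (cmod z)\<^sup>2) powr a * cmod (deriv g z))"
proof -
  have "continuous_on (ball 0 1) (deriv g)"
    by (intro holomorphic_on_imp_continuous_on holomorphic_deriv[OF assms]) auto
  moreover have "(cmod z)\<^sup>2 < 1" if "z \<in> ball 0 1" for z :: complex
    using that by (simp add: abs_square_less_1)
  ultimately show ?thesis
    by (intro continuous_intros) force+
qed

lemma cesaro_0 [simp]: "cesaro f 0 = f 0"
  by (simp add: cesaro_def)

lemma cesaro_bloch_seminorm_le:
  assumes a: "a > 1" and f: "f \<in> bloch_space a"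
  defines "K \<equiv> cmod (f 0) * ((2 / (2*a - 1)) powr (2*a - 1) * a powr a * (a - 1) powr (a - 1)) +
                bloch_seminorm a f * seminorm_weight_bound a"
  shows "cesaro f \<in> bloch_space a" "bloch_seminorm a (cesaro f) \<le> K"
proof -
  have hol: "f holomorphic_on ball 0 1"
    using f by (simp add: bloch_space_def)
  note B = bloch_seminorm_upper[OF f]
  define \<Phi> where "\<Phi> = (\<lambda>z. (1 - (cmod z)\<^sup>2) powr a * cmod (deriv (cesaro f) z))"
  have off_0: "\<Phi> z \<le> K" if z: "z \<in> ball 0 1" "z \<noteq> 0" for z
  proof -
    have r: "0 \<le> cmod z" "0 < cmod z" "cmod z < 1" using z by auto
    have "\<Phi> z \<le> cmod (f 0) * value_weight a (cmod z) + bloch_seminorm a f * seminorm_weight a (cmod z)"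
      unfolding \<Phi>_def by (rule cesaro_deriv_weighted_le[OF hol a B z])
    also have "\<dots> \<le> K"
      unfolding K_def using value_weight_le[OF a r(1,3)] seminorm_weight_le_bound[OF a r(2,3)]
        bloch_seminorm_nonneg[OF f] by (intro add_mono mult_left_mono) auto
    finally show ?thesis .
  qed
  have "\<Phi> z \<le> K" if z: "z \<in> ball 0 1" for z
  proof (cases "z = 0")
    case True
    \<comment> \<open>\<open>seminorm_weight a 0\<close> is junk (division by 0), so the origin is reached by continuity\<close>
    have "isCont \<Phi> 0"
      using continuous_on_bloch_weighted_deriv[OF holomorphic_on_cesaro[OF hol], of a]
      by (simp add: \<Phi>_def continuous_on_eq_continuous_at)
    moreover have "eventually (\<lambda>w. \<Phi> w \<le> K) (at 0)"
      unfolding eventually_at by (rule exI[of _ 1]) (auto intro!: off_0 simp: dist_norm)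
    ultimately have "\<Phi> 0 \<le> K"
      by (intro tendsto_upperbound[of \<Phi> "\<Phi> 0" "at 0"]) (auto simp: isCont_def)
    then show ?thesis
      using True by simp
  qed (use off_0 z in auto)
  then show "cesaro f \<in> bloch_space a" "bloch_seminorm a (cesaro f) \<le> K"
    using bloch_space_seminorm_le[OF holomorphic_on_cesaro[OF hol]] by (auto simp: \<Phi>_def)
qed

theorem theorem6p2:
  fixes \<alpha> A :: real
  assumes "\<alpha> > 1"
    and "A = 1 + (2 / (2*\<alpha> - 1)) powr (2*\<alpha> - 1) * \<alpha> powr \<alpha> * (\<alpha> - 1) powr (\<alpha> - 1)"
  shows "cesaro_bloch_opnorm \<alpha> \<le>
    ereal (if \<alpha> \<le> 2 then max A (2 powr \<alpha> / (\<alpha> - 1))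
           else max A (2 powr \<alpha> * (2 powr \<alpha> - \<alpha> - 1) / (\<alpha> - 1)\<^sup>2))"
proof -
  let ?B = "max A (seminorm_weight_bound \<alpha>)"
  have "bloch_norm \<alpha> (cesaro f) \<le> ?B"
    if f: "f \<in> bloch_space \<alpha>" "bloch_norm \<alpha> f \<le> 1" for f
  proof -
    have S: "0 \<le> bloch_seminorm \<alpha> f" "cmod (f 0) + bloch_seminorm \<alpha> f \<le> 1" "1 \<le> A"
      using f bloch_seminorm_nonneg assms(2) by (auto simp: bloch_norm_eq)
    have "bloch_norm \<alpha> (cesaro f) \<le> cmod (f 0) * A + bloch_seminorm \<alpha> f * seminorm_weight_bound \<alpha>"
      using cesaro_bloch_seminorm_le(2)[OF assms(1) f(1)] assms(2) by (simp add: bloch_norm_eq algebra_simps)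
    also have "\<dots> \<le> (cmod (f 0) + bloch_seminorm \<alpha> f) * ?B"
      using S by (simp add: distrib_right add_mono mult_left_mono)
    also have "\<dots> \<le> ?B"
      using S by (intro mult_left_le_one_le) auto
    finally show ?thesis .
  qed
  then show ?thesis
    unfolding cesaro_bloch_opnorm_def
    by (intro SUP_least) (auto simp: cesaro_bloch_seminorm_le(1)[OF assms(1)] seminorm_weight_bound_def)
qed

end
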